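(* Let $0<v_T<\tfrac12$, $V_u>0$, $g>0$ and $k\ge 0$ (real). Let $L_{g,k}$ be the line through the points $(V_u/(k+1),0)$ and $(0,-gV_u)$, i.e. the graph of $v\mapsto g(k+1)v-gV_u$. Then the central cell fires when $v_u$ is raised from $0$ to $V_u$ if and only if both of the following hold: (1) $L_{g,k}$ lies strictly below the critical segment, i.e. $g(k+1)v-gV_u<F(v)$ for all $v\in[v_{\min},v_i]$; and (2) the slope of $L_{g,k}$ is less than $F'(v_i)$, i.e. $g(k+1)<F'(v_i)$.
   Context: Fix $v_T\in(0,\tfrac12)$ and let $F(v)=v(v-v_T)(1-v)$. Then $F$ has a local minimum at a point $v_{\min}$, a local maximum at a point $v_{\max}$, and an inflection point at $v_i=(1+v_T)/3$, with $0<v_{\min}<v_T<v_i<v_{\max}<1$. The critical segment is the part of the graph of $F$ over $[v_{\min},v_i]$. Central-cell model: for parameters $g>0$ (gap-junction conductance), $k\ge 0$ (real; ratio of total downstream to upstream conductance) and upstream voltage $v_u$, the voltage $v$ of the central cell obeys $\frac{dv}{dt}=F(v)+g(v_u-v)-gkv$. Its equilibria are the solutions of $F(v)=g(k+1)v-gv_u$. Firing: given $V_u>0$, the central cell is said to fire when $v_u$ is raised from $0$ to $V_u$ if there is a threshold–rest collision at some $v_{u,c}\in(0,V_u)$, meaning: there exist $v_{u,c}\in(0,V_u)$ and $v^*\in(v_{\min},v_i)$ with $F(v^* )=g(k+1)v^*-gv_{u,c}$ and $F'(v^* )=g(k+1)$ (at $v_u=v_{u,c}$ the two smallest equilibria,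 rest and threshold, coalesce in a saddle-node bifurcation and disappear as $v_u$ increases further). *)

theory Defs
  imports "HOL-Analysis.Analysis"
begin

definition F :: "real \<Rightarrow> real \<Rightarrow> real" where
  "F vT v = v * (v - vT) * (1 - v)"

definition v_i :: "real \<Rightarrow> real" where
  "v_i vT = (1 + vT) / 3"

text \<open>Location of the local minimum of F: the smaller root of
  F'(v) = -3 v^2 + 2 (1 + vT) v - vT.\<close>
definition v_min :: "real \<Rightarrow> real" where
  "v_min vT = ((1 + vT) - sqrt ((1 + vT)^2 - 3 * vT)) / 3"

text \<open>Firing: a threshold-rest saddle-node collision at some v_{u,c} in (0, V_u).\<close>
definition fires :: "real \<Rightarrow> real \<Rightarrow> real \<Rightarrow> real \<Rightarrow> bool" where
  "fires vT g k Vu \<longleftrightarrow>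
     (\<exists>vuc \<in> {0<..<Vu}. \<exists>vs \<in> {v_min vT<..<v_i vT}.
        F vT vs = g * (k + 1) * vs - g * vuc \<and> deriv (F vT) vs = g * (k + 1))"

end

theory Submission
  imports Defs
begin

text \<open>
  Put \<open>s = g(k+1)\<close>. Since \<open>F' v = F' v\<^sub>i - 3 (v - v\<^sub>i)\<^sup>2\<close>, the slopes \<open>s\<close> attained by \<open>F'\<close>
  on \<open>(v\<^sub>m\<^sub>i\<^sub>n, v\<^sub>i)\<close> are exactly those with \<open>0 < s < F' v\<^sub>i\<close>, each at a single tangency
  point \<open>w\<close>. At that point \<open>F - s\<cdot>id\<close> attains its minimum over \<open>(-\<infinity>, v\<^sub>i]\<close>, so the line of
  slope \<open>s\<close> through \<open>(w, F w)\<close> supports the critical segment from below. The saddle-node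
  occurs at \<open>v\<^sub>u\<^sub>,\<^sub>c = (s w - F w)/g\<close>, which is always positive; it lies below \<open>V\<^sub>u\<close> exactly
  when the line \<open>L\<^sub>g\<^sub>,\<^sub>k\<close> of slope \<open>s\<close> lies below \<open>F\<close> at \<open>w\<close>, i.e. on the whole segment.
\<close>

lemma has_real_derivative_F:
  "(F vT has_real_derivative (-3 * v\<^sup>2 + 2 * (1 + vT) * v - vT)) (at v)"
  unfolding F_def by (auto intro!: derivative_eq_intros simp: power2_eq_square algebra_simps)

lemma deriv_F: "deriv (F vT) v = -3 * v\<^sup>2 + 2 * (1 + vT) * v - vT"
  using has_real_derivative_F by (rule DERIV_imp_deriv)

lemma deriv_F_eq_deriv_F_v_i: "deriv (F vT) v = deriv (F vT) (v_i vT) - 3 * (v - v_i vT)\<^sup>2"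
  unfolding deriv_F v_i_def by (simp add: power2_eq_square field_simps)

lemma v_min_eq: "v_min vT = v_i vT - sqrt (deriv (F vT) (v_i vT) / 3)"
proof -
  have "deriv (F vT) (v_i vT) / 3 = ((1 + vT)\<^sup>2 - 3 * vT) / 3\<^sup>2"
    unfolding deriv_F v_i_def by (simp add: power2_eq_square field_simps)
  moreover have "\<And>x. sqrt (x / 3\<^sup>2) = sqrt x / 3"
    by (simp add: real_sqrt_divide)
  ultimately have "sqrt (deriv (F vT) (v_i vT) / 3) = sqrt ((1 + vT)\<^sup>2 - 3 * vT) / 3"
    by metis
  then show ?thesis
    unfolding v_min_def v_i_def by (simp add: diff_divide_distrib)
qed

lemma v_min_pos:
  assumes "0 < vT"
  shows "0 < v_min vT"
proof -
  have "sqrt ((1 + vT)\<^sup>2 - 3 * vT) < sqrt ((1 + vT)\<^sup>2)"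
    using assms by (intro real_sqrt_less_mono) simp
  then show ?thesis
    unfolding v_min_def using assms by simp
qed

lemma F_minus_linear_at_tangency:
  assumes "deriv (F vT) w = s"
  shows "(F vT v - s * v) - (F vT w - s * w) = (v - w)\<^sup>2 * (1 + vT - 2 * w - v)"
    and "s * w - F vT w = w\<^sup>2 * (1 + vT - 2 * w)"
proof -
  have s: "s = -3 * w\<^sup>2 + 2 * (1 + vT) * w - vT"
    using assms deriv_F by simp
  show "(F vT v - s * v) - (F vT w - s * w) = (v - w)\<^sup>2 * (1 + vT - 2 * w - v)"
    and "s * w - F vT w = w\<^sup>2 * (1 + vT - 2 * w)"
    unfolding s F_def by (simp_all add: power2_eq_square algebra_simps)
qed

lemma F_minus_linear_min_at_tangency:
  assumes "deriv (F vT) w = s" "w < v_i vT" "v \<le> v_i vT"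
  shows "F vT w - s * w \<le> F vT v - s * v"
proof -
  have "0 < 1 + vT - 2 * w - v"
    using assms(2,3) unfolding v_i_def by simp
  then have "0 \<le> (v - w)\<^sup>2 * (1 + vT - 2 * w - v)"
    by simp
  with F_minus_linear_at_tangency(1)[OF assms(1), of v] show ?thesis
    by linarith
qed

lemma tangency_offset_pos:
  assumes "deriv (F vT) w = s" "0 < w" "w < v_i vT"
  shows "0 < s * w - F vT w"
  using assms(2,3) unfolding F_minus_linear_at_tangency(2)[OF assms(1)] v_i_def by simp

lemma deriv_F_v_i_pos: "0 < deriv (F vT) (v_i vT)"
proof -
  have "deriv (F vT) (v_i vT) = (vT - 1/2)\<^sup>2 / 3 + 1/4"
    unfolding deriv_F v_i_def by (simp add: power2_eq_square field_simps)
  moreover have "0 \<le> (vT - 1/2)\<^sup>2"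
    by simp
  ultimately show ?thesis
    by linarith
qed

lemma deriv_F_v_min: "deriv (F vT) (v_min vT) = 0"
proof -
  have "(v_min vT - v_i vT)\<^sup>2 = deriv (F vT) (v_i vT) / 3"
    unfolding v_min_eq using deriv_F_v_i_pos[of vT] by simp
  then show ?thesis
    using deriv_F_eq_deriv_F_v_i[of vT "v_min vT"] by simp
qed

lemma deriv_F_attains_iff:
  "(\<exists>w \<in> {v_min vT<..<v_i vT}. deriv (F vT) w = s) \<longleftrightarrow> 0 < s \<and> s < deriv (F vT) (v_i vT)"
proof
  let ?d = "deriv (F vT) (v_i vT)"
  assume "\<exists>w \<in> {v_min vT<..<v_i vT}. deriv (F vT) w = s"
  then obtain w where w: "v_min vT < w" "w < v_i vT" and s: "deriv (F vT) w = s"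
    by auto
  have "(v_i vT - w)\<^sup>2 < (v_i vT - v_min vT)\<^sup>2"
    using w by (intro power_strict_mono) auto
  then have "(w - v_i vT)\<^sup>2 < (v_min vT - v_i vT)\<^sup>2"
    by (simp add: power2_commute)
  moreover have "0 < (w - v_i vT)\<^sup>2"
    using w(2) by simp
  ultimately show "0 < s \<and> s < ?d"
    using s deriv_F_v_min[of vT] deriv_F_eq_deriv_F_v_i[of vT w]
      deriv_F_eq_deriv_F_v_i[of vT "v_min vT"] by linarith
next
  let ?d = "deriv (F vT) (v_i vT)"
  assume s: "0 < s \<and> s < ?d"
  define w where "w = v_i vT - sqrt ((?d - s) / 3)"
  have "sqrt ((?d - s) / 3) < sqrt (?d / 3)"
    using s by (intro real_sqrt_less_mono) simp
  then have "v_min vT < w"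
    unfolding w_def v_min_eq by simp
  moreover have "w < v_i vT"
    unfolding w_def using s by simp
  moreover have "(w - v_i vT)\<^sup>2 = (?d - s) / 3"
    unfolding w_def using s by simp
  then have "deriv (F vT) w = s"
    unfolding deriv_F_eq_deriv_F_v_i[of vT w] by simp
  ultimately show "\<exists>w \<in> {v_min vT<..<v_i vT}. deriv (F vT) w = s"
    by auto
qed

lemma line_below_critical_segment_iff:
  assumes "deriv (F vT) w = s" "v_min vT < w" "w < v_i vT"
  shows "(\<forall>v \<in> {v_min vT..v_i vT}. s * v - c < F vT v) \<longleftrightarrow> s * w - c < F vT w"
  using F_minus_linear_min_at_tangency[OF assms(1,3)] assms(2,3) by force

lemma fires_iff_tangency:
  assumes "0 < vT" "0 < g"
  shows "fires vT g k Vu \<longleftrightarrow>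
    (\<exists>w \<in> {v_min vT<..<v_i vT}. deriv (F vT) w = g * (k + 1) \<and> g * (k + 1) * w - g * Vu < F vT w)"
    (is "_ \<longleftrightarrow> (\<exists>w \<in> _. ?tangent w \<and> _)")
proof
  assume "fires vT g k Vu"
  then obtain vuc w where "vuc < Vu" "w \<in> {v_min vT<..<v_i vT}" "?tangent w"
    and "F vT w = g * (k + 1) * w - g * vuc"
    unfolding fires_def by auto
  with assms(2) show "\<exists>w \<in> {v_min vT<..<v_i vT}. ?tangent w \<and> g * (k + 1) * w - g * Vu < F vT w"
    by (intro bexI[of _ w]) auto
next
  assume "\<exists>w \<in> {v_min vT<..<v_i vT}. ?tangent w \<and> g * (k + 1) * w - g * Vu < F vT w"
  then obtain w where w: "v_min vT < w" "w < v_i vT" and tangent: "?tangent w"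
    and below: "g * (k + 1) * w - g * Vu < F vT w"
    by auto
  define vuc where "vuc = (g * (k + 1) * w - F vT w) / g"
  have "0 < vuc"
    unfolding vuc_def using tangency_offset_pos[OF tangent _ w(2)] v_min_pos[OF assms(1)] w(1) assms(2)
    by simp
  moreover have "vuc < Vu"
    using below assms(2) unfolding vuc_def by (simp add: pos_divide_less_eq mult.commute)
  moreover have "F vT w = g * (k + 1) * w - g * vuc"
    unfolding vuc_def using assms(2) by simp
  ultimately show "fires vT g k Vu"
    unfolding fires_def using w tangent by (intro bexI[of _ vuc] bexI[of _ w]) auto
qed

theorem proposition2p1:
  fixes vT Vu g k :: real
  assumes "0 < vT" "vT < 1/2" "0 < Vu" "0 < g" "0 \<le> k"
  shows "fires vT g k Vu \<longleftrightarrow>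
           ((\<forall>v \<in> {v_min vT..v_i vT}. g * (k + 1) * v - g * Vu < F vT v) \<and>
            g * (k + 1) < deriv (F vT) (v_i vT))"
proof -
  let ?s = "g * (k + 1)"
  let ?below = "\<forall>v \<in> {v_min vT..v_i vT}. ?s * v - g * Vu < F vT v"
  have "fires vT g k Vu \<longleftrightarrow> (\<exists>w \<in> {v_min vT<..<v_i vT}. deriv (F vT) w = ?s \<and> ?s * w - g * Vu < F vT w)"
    using assms(1,4) by (rule fires_iff_tangency)
  also have "\<dots> \<longleftrightarrow> (\<exists>w \<in> {v_min vT<..<v_i vT}. deriv (F vT) w = ?s \<and> ?below)"
  proof (rule bex_cong[OF refl])
    fix w assume "w \<in> {v_min vT<..<v_i vT}"
    then show "(deriv (F vT) w = ?s \<and> ?s * w - g * Vu < F vT w) \<longleftrightarrow> (deriv (F vT) w = ?s \<and> ?below)"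
      using line_below_critical_segment_iff[of vT w ?s "g * Vu"] by auto
  qed
  also have "\<dots> \<longleftrightarrow> ?below \<and> 0 < ?s \<and> ?s < deriv (F vT) (v_i vT)"
    using deriv_F_attains_iff[of vT ?s] by blast
  finally show ?thesis
    using assms(4,5) by simp
qed

end
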